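(* Let $n$ be a positive integer with at least two distinct prime factors, let $q_1$ be the largest prime smaller than $n$, and write $n=\prod_i p_i^{e_i}$; let $p_1^{a_1}$ be the largest and $p_2^{a_2}$ the second largest of the prime powers $p_i^{e_i}$ in this factorization ($p_1\neq p_2$). If $p_1^{a_1}p_2^{a_2}>n-q_1$, then $n$ satisfies the 3-variation of Condition 1 with $p_1$, $p_2$ and $q_1$.
   Context: A positive integer $n$ satisfies the $N$-variation of Condition 1 with primes $p_1,\dots,p_N$ if these are $N$ different primes and for every $1\le k\le n-1$, $\binom{n}{k}$ is divisible by at least one of $p_1,\dots,p_N$. Here "largest prime-power divisor" and "second largest prime-power divisor" refer to the maximal prime powers $p_i^{e_i}$ exactly dividing $n$. *)

theory Defs
  imports "HOL-Computational_Algebra.Primes"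
begin

definition cond1_var :: "nat \<Rightarrow> nat \<Rightarrow> nat set \<Rightarrow> bool" where
  "cond1_var n N P \<longleftrightarrow> finite P \<and> card P = N \<and> (\<forall>p\<in>P. prime p) \<and>
     (\<forall>k. 1 \<le> k \<and> k \<le> n - 1 \<longrightarrow> (\<exists>p\<in>P. p dvd (n choose k)))"

end

theory Submission
  imports Defs "HOL-Library.Discrete_Functions"
begin

(* Suppose none of p1, p2, q1 divides C(n,k) for some 0 < k < n. Since k C(n,k) = n C(n-1,k-1),
   a prime p not dividing C(n,k) has its full power p^(v_p n) dividing k; so p1^a1 p2^a2 divides
   k and, by symmetry, n - k. As this product exceeds n - q1, both k and n - k are below q1 <= n,
   hence q1 divides n! but neither k! nor (n-k)!, so q1 divides C(n,k) after all.

   The three primes are distinct because q1 does not divide n: otherwise 2 q1 <= n, and Bertrand's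
   postulate would give a prime in (q1, 2 q1) below n. Bertrand's postulate is proved by Erdos's
   argument: if (n, 2n] contained no prime, Legendre's formula would confine the prime factors of
   C(2n,n) to p <= 2n/3, with p^(v_p) <= 2n and v_p <= 1 once p^2 > 2n; with the bound 4^m on the
   product of the primes up to m this gives C(2n,n) <= (2n)^sqrt(2n) 4^(2n/3), contradicting
   C(2n,n) >= 4^n/(2n) for n >= 512. Smaller n are covered by the primes
   2, 3, 5, 7, 13, 23, 43, 83, 163, 317, 631, each less than twice its predecessor. *)

section \<open>Legendre's formula and the central binomial coefficient\<close>

lemma multiplicity_fact:
  fixes p :: nat
  assumes p: "prime p"
  shows "multiplicity p (fact n) = (\<Sum>i=1..n. n div p ^ i)"
proof (induction n)
  case 0
  then show ?case by simp
next
  case (Suc n)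
  define v where "v = multiplicity p (Suc n)"
  have p_gt_1: "Suc 0 < p" using p prime_gt_Suc_0_nat by blast
  have "multiplicity p (fact (Suc n) :: nat) = multiplicity p (Suc n * fact n)"
    by (simp only: fact_Suc of_nat_id)
  also have "\<dots> = v + multiplicity p (fact n :: nat)"
    unfolding v_def using p by (intro prime_elem_multiplicity_mult_distrib) auto
  also have "multiplicity p (fact n :: nat) = (\<Sum>i=1..Suc n. n div p ^ i)"
    using Suc.IH power_gt_expt[OF p_gt_1, of "Suc n"] by simp
  finally have IH: "multiplicity p (fact (Suc n) :: nat) = v + (\<Sum>i=1..Suc n. n div p ^ i)" .
  have "p ^ v \<le> Suc n"
    unfolding v_def by (intro dvd_imp_le multiplicity_dvd) simp
  hence "v \<le> Suc n" using power_gt_expt[OF p_gt_1, of v] by linarith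
  moreover have "p ^ i dvd Suc n \<longleftrightarrow> i \<le> v" for i
    unfolding v_def using p by (intro power_dvd_iff_le_multiplicity) auto
  ultimately have "{i\<in>{1..Suc n}. p ^ i dvd Suc n} = {1..v}"
    by (intro set_eqI) (simp only: mem_Collect_eq atLeastAtMost_iff, blast intro: order_trans)
  hence "card {i\<in>{1..Suc n}. p ^ i dvd Suc n} = v" by simp
  moreover have "card {i\<in>{1..Suc n}. p ^ i dvd Suc n} = (\<Sum>i=1..Suc n. if p ^ i dvd Suc n then 1 else 0)"
    by (simp only: card_eq_sum sum.inter_filter[OF finite_atLeastAtMost])
  ultimately have ind: "(\<Sum>i=1..Suc n. if p ^ i dvd Suc n then 1 else 0) = v" by linarith
  have "(\<Sum>i=1..Suc n. Suc n div p ^ i)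
      = (\<Sum>i=1..Suc n. n div p ^ i + (if p ^ i dvd Suc n then 1 else 0))"
    using p_gt_1 by (intro sum.cong) (auto simp: div_Suc dvd_eq_mod_eq_0)
  also have "\<dots> = (\<Sum>i=1..Suc n. n div p ^ i) + v"
    by (simp only: sum.distrib ind)
  finally show ?case using IH by simp
qed

lemma double_div_le_div_double:
  fixes n k :: nat
  shows "2 * (n div k) \<le> 2 * n div k" and "2 * n div k \<le> 2 * (n div k) + 1"
proof -
  have "2 * n = 2 * (n mod k) + 2 * (n div k) * k"
    using div_mult_mod_eq[of n k] by linarith
  hence "2 * n div k = 2 * (n div k) + 2 * (n mod k) div k" if "k > 0"
    using that by simp
  moreover have "2 * (n mod k) div k \<le> 1"
  proof (cases "k = 0")
    case False
    then have "2 * (n mod k) < 2 * k" by simp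
    then have "2 * (n mod k) div k < 2" by (rule less_mult_imp_div_less)
    then show ?thesis by simp
  qed simp
  ultimately show "2 * (n div k) \<le> 2 * n div k" and "2 * n div k \<le> 2 * (n div k) + 1"
    by (cases "k = 0"; simp)+
qed

lemma multiplicity_central_binomial:
  fixes p n :: nat
  assumes p: "prime p"
  shows "multiplicity p (2 * n choose n) = (\<Sum>i=1..2*n. 2 * n div p ^ i - 2 * (n div p ^ i))"
proof -
  have "multiplicity p (fact (2 * n) :: nat) = multiplicity p (fact n * fact n * (2 * n choose n))"
    using binomial_fact_lemma[of n "2 * n"] by simp
  also have "\<dots> = 2 * multiplicity p (fact n :: nat) + multiplicity p (2 * n choose n)"
    using p by (simp add: prime_elem_multiplicity_mult_distrib)
  finally have "multiplicity p (fact (2 * n) :: nat)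
      = 2 * multiplicity p (fact n :: nat) + multiplicity p (2 * n choose n)" .
  moreover have "2 * (\<Sum>i=1..n. n div p ^ i) = (\<Sum>i=1..2*n. 2 * (n div p ^ i))"
  proof -
    have "n div p ^ i = 0" if "n < i" for i
    proof -
      have "n < p ^ n" using p power_gt_expt prime_gt_Suc_0_nat by blast
      also have "\<dots> < p ^ i" using that p prime_gt_1_nat by (intro power_strict_increasing) auto
      finally show ?thesis by simp
    qed
    hence "(\<Sum>i=1..n. n div p ^ i) = (\<Sum>i=1..2*n. n div p ^ i)"
      by (intro sum.mono_neutral_left) auto
    thus ?thesis by (simp add: sum_distrib_left)
  qed
  ultimately have "(\<Sum>i=1..2*n. 2 * n div p ^ i)
      = (\<Sum>i=1..2*n. 2 * (n div p ^ i)) + multiplicity p (2 * n choose n)"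
    using p by (simp add: multiplicity_fact)
  moreover have "(\<Sum>i=1..2*n. 2 * n div p ^ i - 2 * (n div p ^ i))
      = (\<Sum>i=1..2*n. 2 * n div p ^ i) - (\<Sum>i=1..2*n. 2 * (n div p ^ i))"
    using double_div_le_div_double(1) by (intro sum_subtractf_nat) auto
  ultimately show ?thesis by simp
qed

lemma prime_power_multiplicity_central_binomial_le:
  fixes p n :: nat
  assumes p: "prime p" and n: "n > 0"
  shows "p ^ multiplicity p (2 * n choose n) \<le> 2 * n"
proof (rule ccontr)
  define v where "v = multiplicity p (2 * n choose n)"
  assume "\<not> p ^ multiplicity p (2 * n choose n) \<le> 2 * n"
  hence big: "2 * n < p ^ v" unfolding v_def by simp
  have "v = (\<Sum>i=1..2*n. 2 * n div p ^ i - 2 * (n div p ^ i))"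
    unfolding v_def using p by (rule multiplicity_central_binomial)
  also have "\<dots> \<le> (\<Sum>i=1..2*n. if p ^ i \<le> 2 * n then 1 else 0)"
  proof (intro sum_mono)
    fix i
    show "2 * n div p ^ i - 2 * (n div p ^ i) \<le> (if p ^ i \<le> 2 * n then 1 else 0)"
      using double_div_le_div_double(2)[of n "p ^ i"] by auto
  qed
  also have "\<dots> = card {i\<in>{1..2*n}. p ^ i \<le> 2 * n}"
    by (simp only: card_eq_sum sum.inter_filter[OF finite_atLeastAtMost])
  also have "\<dots> \<le> card {1..<v}"
  proof (rule card_mono)
    have "i < v" if "p ^ i \<le> 2 * n" for i
      using that big p prime_gt_1_nat power_less_imp_less_exp by (meson le_less_trans)
    thus "{i\<in>{1..2*n}. p ^ i \<le> 2 * n} \<subseteq> {1..<v}" by auto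
  qed simp
  finally have "v \<le> v - 1" by simp
  moreover have "v \<noteq> 0" using big n by (intro notI) simp
  ultimately show False by linarith
qed

lemma prime_not_dvd_central_binomial:
  fixes p n :: nat
  assumes p: "prime p" "2 < p" and "p \<le> n" "2 * n < 3 * p"
  shows "\<not> p dvd (2 * n choose n)"
proof -
  have "3 * p \<le> p ^ 2" using p(2) by (simp add: power2_eq_square)
  hence square: "2 * n < p ^ 2" using assms(4) by linarith
  have "2 * n div p ^ i - 2 * (n div p ^ i) = 0" for i
  proof (cases "i \<le> 1")
    case True
    have "n div p = 1" "2 * n div p = 2" using assms by (simp_all add: div_nat_eqI)
    thus ?thesis using True by (cases i) auto
  next
    case False
    hence "p ^ 2 \<le> p ^ i" using p(2) by (intro power_increasing) auto
    thus ?thesis using square by simp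
  qed
  hence "multiplicity p (2 * n choose n) = 0"
    using p(1) by (simp add: multiplicity_central_binomial)
  thus ?thesis using p(1) prime_multiplicity_gt_zero_iff[of p "2 * n choose n"] by simp
qed

section \<open>The primorial bound\<close>

lemma prime_dvd_choose:
  fixes p n k :: nat
  assumes p: "prime p" and "p \<le> n" "k < p" "n - k < p"
  shows "p dvd (n choose k)"
proof (cases "k \<le> n")
  case True
  have "p dvd fact k * fact (n - k) * (n choose k)"
    using binomial_fact_lemma[OF True] p assms(2) by (simp add: prime_dvd_fact_iff)
  moreover have "\<not> p dvd fact k * fact (n - k)"
    using p assms(3,4) by (simp add: prime_dvd_mult_iff prime_dvd_fact_iff)
  ultimately show ?thesis using p by (simp add: prime_dvd_mult_iff)
qed (simp add: binomial_eq_0)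

lemma prod_primes_dvd:
  fixes x :: nat
  assumes "finite A" "\<And>p. p \<in> A \<Longrightarrow> prime p \<and> p dvd x"
  shows "\<Prod>A dvd x"
  using assms
proof (induction A rule: finite_induct)
  case (insert a A)
  have "coprime a (\<Prod>A)"
    using insert by (intro prod_coprime_right primes_coprime) auto
  with insert show ?case by (simp add: divides_mult)
qed simp

definition primorial :: "nat \<Rightarrow> nat" where
  "primorial m = \<Prod>{p. prime p \<and> p \<le> m}"

lemma prod_primes_between_le:
  "\<Prod>{p::nat. prime p \<and> k + 1 < p \<and> p \<le> 2 * k + 1} \<le> 4 ^ k"
proof -
  have "\<Prod>{p::nat. prime p \<and> k + 1 < p \<and> p \<le> 2 * k + 1} dvd (2 * k + 1 choose (k + 1))"
  proof (rule prod_primes_dvd)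
    show "finite {p::nat. prime p \<and> k + 1 < p \<and> p \<le> 2 * k + 1}" by simp
    show "prime p \<and> p dvd (2 * k + 1 choose (k + 1))"
      if "p \<in> {p. prime p \<and> k + 1 < p \<and> p \<le> 2 * k + 1}" for p
      using that prime_dvd_choose[of p "2 * k + 1" "k + 1"] by auto
  qed
  hence "\<Prod>{p::nat. prime p \<and> k + 1 < p \<and> p \<le> 2 * k + 1} \<le> (2 * k + 1 choose (k + 1))"
    by (rule dvd_imp_le) simp
  also have "\<dots> = (2 * k + 1 choose k)"
    using binomial_symmetric[of k "2 * k + 1"] by simp
  also have "\<dots> \<le> (\<Sum>i\<le>k. 2 * k + 1 choose i)"
    by (rule member_le_sum) auto
  also have "\<dots> = 4 ^ k"
    using binomial_r_part_sum[of k] by (simp add: power_mult)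
  finally show ?thesis .
qed

lemma primorial_le_4_pow: "primorial m \<le> 4 ^ m"
proof (induction m rule: less_induct)
  case (less m)
  consider "m \<le> 2" | "2 < m" "even m" | k where "m = 2 * k + 1" "1 \<le> k"
  proof (cases "m \<le> 2 \<or> even m")
    case False
    then obtain k where "m = 2 * k + 1" by (auto elim: oddE)
    with False that(3)[of k] show ?thesis by simp
  qed (use that not_le in blast)
  then show ?case
  proof cases
    case 1
    hence "{p::nat. prime p \<and> p \<le> m} = (if m = 2 then {2} else {})"
      by (auto dest: prime_ge_2_nat)
    thus ?thesis unfolding primorial_def by simp
  next
    case 2
    hence "{p::nat. prime p \<and> p \<le> m} = {p. prime p \<and> p \<le> m - 1}"
      using prime_odd_nat by (auto simp: le_eq_less_or_eq)
    hence "primorial m = primorial (m - 1)" unfolding primorial_def by simp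
    also have "\<dots> \<le> 4 ^ (m - 1)" using 2 less by simp
    also have "\<dots> \<le> 4 ^ m" by (intro power_increasing) auto
    finally show ?thesis .
  next
    case 3
    define T where "T = {p::nat. prime p \<and> k + 1 < p \<and> p \<le> 2 * k + 1}"
    have "{p::nat. prime p \<and> p \<le> m} = {p. prime p \<and> p \<le> k + 1} \<union> T"
      unfolding T_def 3 by auto
    hence "primorial m = \<Prod>({p. prime p \<and> p \<le> k + 1} \<union> T)"
      unfolding primorial_def by simp
    also have "\<dots> = primorial (k + 1) * \<Prod>T"
      unfolding primorial_def by (rule prod.union_disjoint) (auto simp: T_def)
    also have "\<dots> \<le> 4 ^ (k + 1) * 4 ^ k"
      using less[of "k + 1"] prod_primes_between_le[of k] 3 unfolding T_def
      by (intro mult_le_mono) auto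
    also have "\<dots> = 4 ^ m" using 3 by (simp flip: power_add)
    finally show ?thesis .
  qed
qed

section \<open>Bertrand's postulate\<close>

lemma prime_factor_central_binomial_le:
  fixes n p :: nat
  assumes n: "3 \<le> n" and no_prime: "\<not> (\<exists>q. prime q \<and> n < q \<and> q \<le> 2 * n)"
    and p: "prime p" "p dvd (2 * n choose n)"
  shows "3 * p \<le> 2 * n"
proof (rule ccontr)
  assume "\<not> 3 * p \<le> 2 * n"
  hence "2 < p" "2 * n < 3 * p" using n by auto
  have "(2 * n choose n) dvd fact (2 * n)"
    using binomial_fact_lemma[of n "2 * n"] by (metis dvd_triv_right le_add2 mult_2)
  hence "p \<le> 2 * n" using p by (metis dvd_trans prime_dvd_fact_iff)
  hence "p \<le> n" using no_prime p(1) not_le by blast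
  with p \<open>2 < p\<close> \<open>2 * n < 3 * p\<close> show False using prime_not_dvd_central_binomial by blast
qed

lemma prod_small_prime_powers_central_binomial_le:
  fixes n :: nat
  assumes "0 < n"
  shows "(\<Prod>p\<in>prime_factors (2 * n choose n) \<inter> {p. p * p \<le> 2 * n}.
           p ^ multiplicity p (2 * n choose n)) \<le> (2 * n) ^ floor_sqrt (2 * n)"
proof -
  let ?S = "prime_factors (2 * n choose n) \<inter> {p. p * p \<le> 2 * n}"
  have "(\<Prod>p\<in>?S. p ^ multiplicity p (2 * n choose n)) \<le> (\<Prod>p\<in>?S. 2 * n)"
    using prime_power_multiplicity_central_binomial_le assms by (intro prod_mono) auto
  also have "\<dots> = (2 * n) ^ card ?S" by simp
  also have "\<dots> \<le> (2 * n) ^ floor_sqrt (2 * n)"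
  proof (rule power_increasing)
    have "?S \<subseteq> {1..floor_sqrt (2 * n)}"
    proof
      fix p assume "p \<in> ?S"
      hence "prime p" "p * p \<le> 2 * n" by auto
      thus "p \<in> {1..floor_sqrt (2 * n)}"
        by (auto simp: le_floor_sqrt_iff power2_eq_square dest: prime_ge_1_nat)
    qed
    thus "card ?S \<le> floor_sqrt (2 * n)" using card_mono[of "{1..floor_sqrt (2 * n)}"] by simp
  qed (use assms in simp)
  finally show ?thesis .
qed

lemma prod_large_prime_powers_central_binomial_le:
  fixes n :: nat
  assumes n: "3 \<le> n" and no_prime: "\<not> (\<exists>q. prime q \<and> n < q \<and> q \<le> 2 * n)"
  shows "(\<Prod>p\<in>prime_factors (2 * n choose n) - {p. p * p \<le> 2 * n}.
           p ^ multiplicity p (2 * n choose n)) \<le> 4 ^ (2 * n div 3)"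
proof -
  let ?L = "prime_factors (2 * n choose n) - {p. p * p \<le> 2 * n}"
  have "p ^ multiplicity p (2 * n choose n) = p" if "p \<in> ?L" for p
  proof -
    have p: "prime p" "p dvd (2 * n choose n)" using that by auto
    have "p ^ multiplicity p (2 * n choose n) \<le> 2 * n"
      using prime_power_multiplicity_central_binomial_le p(1) n by simp
    also have "\<dots> < p ^ 2" using that by (simp add: power2_eq_square)
    finally have "multiplicity p (2 * n choose n) < 2"
      using p(1) prime_gt_1_nat power_less_imp_less_exp by blast
    moreover have "multiplicity p (2 * n choose n) \<noteq> 0"
      using p prime_multiplicity_gt_zero_iff[of p "2 * n choose n"] by simp
    ultimately show ?thesis by (simp add: numeral_2_eq_2 less_Suc_eq)
  qed
  hence "(\<Prod>p\<in>?L. p ^ multiplicity p (2 * n choose n)) = \<Prod>?L" by simp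
  also have "\<dots> \<le> primorial (2 * n div 3)"
    unfolding primorial_def
  proof (rule dvd_imp_le)
    show "\<Prod>?L dvd \<Prod>{p. prime p \<and> p \<le> 2 * n div 3}"
    proof (intro prod_dvd_prod_subset subsetI)
      fix p assume "p \<in> ?L"
      hence p: "prime p" "p dvd (2 * n choose n)" by auto
      hence "3 * p \<le> 2 * n" by (rule prime_factor_central_binomial_le[OF n no_prime])
      thus "p \<in> {p. prime p \<and> p \<le> 2 * n div 3}" using p(1) by (simp add: less_eq_div_iff_mult_less_eq mult.commute)
    qed simp
  qed (auto intro: prod_pos dest: prime_gt_0_nat)
  also have "\<dots> \<le> 4 ^ (2 * n div 3)" by (rule primorial_le_4_pow)
  finally show ?thesis .
qed

lemma central_binomial_le_if_no_prime:
  fixes n :: nat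
  assumes n: "3 \<le> n" and no_prime: "\<not> (\<exists>q. prime q \<and> n < q \<and> q \<le> 2 * n)"
  shows "(2 * n choose n) \<le> (2 * n) ^ floor_sqrt (2 * n) * 4 ^ (2 * n div 3)"
proof -
  let ?C = "2 * n choose n" and ?X = "{p. p * p \<le> 2 * n}"
  have "?C = (\<Prod>p\<in>prime_factors ?C. p ^ multiplicity p ?C)"
    by (rule prime_factorization_nat) simp
  also have "\<dots> = (\<Prod>p\<in>prime_factors ?C \<inter> ?X. p ^ multiplicity p ?C)
      * (\<Prod>p\<in>prime_factors ?C - ?X. p ^ multiplicity p ?C)"
    by (rule prod.Int_Diff) simp
  also have "\<dots> \<le> (2 * n) ^ floor_sqrt (2 * n) * 4 ^ (2 * n div 3)"
    using prod_small_prime_powers_central_binomial_le prod_large_prime_powers_central_binomial_le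
      assms by (intro mult_le_mono) auto
  finally show ?thesis .
qed

lemma power6_le_power2:
  fixes s :: nat
  assumes "31 \<le> s"
  shows "(s + 1) ^ 6 \<le> 2 ^ (s - 1)"
  using assms
proof (induction s rule: dec_induct)
  case base
  show ?case by simp
next
  case (step s)
  have "32 * (s + 2) \<le> 33 * (s + 1)" using step(1) by simp
  hence "(32 * (s + 2)) ^ 6 \<le> (33 * (s + 1)) ^ 6" by (rule power_mono) simp
  hence "32 ^ 6 * (s + 2) ^ 6 \<le> 33 ^ 6 * (s + 1) ^ 6" by (simp only: power_mult_distrib)
  hence "(s + 2) ^ 6 \<le> 2 * (s + 1) ^ 6" by simp
  also have "\<dots> \<le> 2 * 2 ^ (s - 1)" using step.IH by simp
  also have "\<dots> = 2 ^ (Suc s - 1)" using step(1) by (cases s) auto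
  finally show ?case by simp
qed

lemma power_floor_sqrt_less_power2:
  fixes N :: nat
  assumes "1024 \<le> N"
  shows "N ^ (3 * (floor_sqrt N + 1)) < 2 ^ N"
proof -
  define s where "s = floor_sqrt N"
  have s: "s\<^sup>2 \<le> N" "N < (s + 1)\<^sup>2"
    unfolding s_def using floor_sqrt_power2_le Suc_floor_sqrt_power2_gt by auto
  have "32 \<le> s" unfolding s_def by (rule le_floor_sqrtI) (use assms in simp)
  have "N ^ (3 * (s + 1)) < ((s + 1)\<^sup>2) ^ (3 * (s + 1))"
    by (rule power_strict_mono) (use s in simp_all)
  also have "\<dots> = ((s + 1) ^ 6) ^ (s + 1)"
    by (simp add: power_add flip: power_mult)
  also have "\<dots> \<le> (2 ^ (s - 1)) ^ (s + 1)"
    by (rule power_mono) (use power6_le_power2[of s] \<open>32 \<le> s\<close> in simp_all)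
  also have "\<dots> = 2 ^ ((s - 1) * (s + 1))" by (simp only: power_mult)
  also have "\<dots> \<le> 2 ^ N"
  proof (rule power_increasing)
    have "(s - 1) * (s + 1) \<le> s * s" by (cases s) (simp_all add: algebra_simps)
    thus "(s - 1) * (s + 1) \<le> N" using s by (simp add: power2_eq_square)
  qed simp
  finally show ?thesis unfolding s_def .
qed

lemma central_binomial_lower_bound_nat:
  fixes n :: nat
  assumes "0 < n"
  shows "4 ^ n \<le> (2 * n choose n) * (2 * n)"
proof -
  have "4 ^ n / (2 * real n) \<le> real (2 * n choose n)"
    by (rule central_binomial_lower_bound[OF assms])
  hence "real (4 ^ n) \<le> real ((2 * n choose n) * (2 * n))"
    using assms by (simp add: field_simps)
  thus ?thesis by (simp only: of_nat_le_iff)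
qed

lemma bertrand_large:
  fixes n :: nat
  assumes n: "512 \<le> n"
  shows "\<exists>p. prime p \<and> n < p \<and> p \<le> 2 * n"
proof (rule ccontr)
  define s where "s = floor_sqrt (2 * n)"
  define m where "m = 2 * n div 3"
  assume "\<not> ?thesis"
  hence "(2 * n choose n) \<le> (2 * n) ^ s * 4 ^ m"
    unfolding s_def m_def using n by (intro central_binomial_le_if_no_prime) auto
  have "4 ^ n \<le> (2 * n choose n) * (2 * n)"
    using n by (intro central_binomial_lower_bound_nat) simp
  also have "\<dots> \<le> (2 * n) ^ s * 4 ^ m * (2 * n)"
    using \<open>(2 * n choose n) \<le> (2 * n) ^ s * 4 ^ m\<close> by (rule mult_le_mono1)
  also have "\<dots> = (2 * n) ^ (s + 1) * 4 ^ m" by simp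
  finally have "4 ^ (n - m) * 4 ^ m \<le> (2 * n) ^ (s + 1) * 4 ^ m"
    by (simp add: m_def flip: power_add)
  hence "(4 ^ (n - m)) ^ 3 \<le> ((2 * n) ^ (s + 1)) ^ 3"
    by (intro power_mono) simp_all
  moreover have "(2::nat) ^ (2 * n) \<le> (4 ^ (n - m)) ^ 3"
  proof -
    have "(2::nat) ^ (2 * n) = 4 ^ n" by (simp add: power_mult)
    also have "\<dots> \<le> 4 ^ ((n - m) * 3)" by (intro power_increasing) (simp_all add: m_def)
    finally show ?thesis by (simp only: power_mult)
  qed
  moreover have "((2 * n) ^ (s + 1)) ^ 3 < 2 ^ (2 * n)"
  proof -
    have "((2 * n) ^ (s + 1)) ^ 3 = (2 * n) ^ (3 * (s + 1))" by (metis power_mult mult.commute)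
    also have "\<dots> < 2 ^ (2 * n)"
      unfolding s_def using n by (intro power_floor_sqrt_less_power2) simp
    finally show ?thesis .
  qed
  ultimately show False by linarith
qed

lemma prime_of_no_divisor_below:
  fixes p b :: nat
  assumes "1 < p" "p < b * b" "\<forall>d\<in>set [2..<b]. \<not> d dvd p"
  shows "prime p"
proof (rule ccontr)
  assume "\<not> prime p"
  then obtain d where d: "d dvd p" "d \<noteq> 1" "d \<noteq> p"
    using assms(1) prime_nat_iff by blast
  then obtain e where e: "p = d * e" by blast
  let ?m = "min d e"
  have "0 < d * e" using e assms(1) by linarith
  hence "d \<noteq> 0" "e \<noteq> 0" by auto
  moreover have "e \<noteq> 1" using d(3) e by auto
  ultimately have "1 < d" "1 < e" using d(2) by auto
  hence "2 \<le> ?m" "?m dvd p" using e by (auto simp: min_def)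
  moreover have "?m < b"
  proof (rule ccontr)
    assume "\<not> ?m < b"
    hence "b * b \<le> d * e" by (intro mult_le_mono) auto
    with e assms(2) show False by simp
  qed
  ultimately show False using assms(3) by auto
qed

lemma bertrand_of_prime_chain:
  fixes a n :: nat
  assumes "successively (\<lambda>a b. prime b \<and> b \<le> 2 * a) (a # ps)" and "a \<le> n" and "n < last (a # ps)"
  shows "\<exists>p. prime p \<and> n < p \<and> p \<le> 2 * n"
  using assms
proof (induction ps arbitrary: a)
  case (Cons b ps)
  show ?case
  proof (cases "n < b")
    case True
    thus ?thesis using Cons.prems by (intro exI[of _ b]) auto
  next
    case False
    thus ?thesis using Cons by auto
  qed
qed simp

lemma bertrand:
  fixes n :: nat
  assumes "1 \<le> n"
  shows "\<exists>p. prime p \<and> n < p \<and> p \<le> 2 * n"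
proof (cases "n < 631")
  case True
  have "prime (3::nat)" "prime (5::nat)" "prime (7::nat)" "prime (13::nat)" "prime (23::nat)"
      "prime (43::nat)"
    by simp_all
  moreover have "prime (83::nat)" by (rule prime_of_no_divisor_below[where b = 10]) (simp_all add: upt_rec)
  moreover have "prime (163::nat)" by (rule prime_of_no_divisor_below[where b = 13]) (simp_all add: upt_rec)
  moreover have "prime (317::nat)" by (rule prime_of_no_divisor_below[where b = 18]) (simp_all add: upt_rec)
  moreover have "prime (631::nat)" by (rule prime_of_no_divisor_below[where b = 26]) (simp_all add: upt_rec)
  ultimately have "successively (\<lambda>a b. prime b \<and> b \<le> 2 * a)
      [1, 2, 3, 5, 7, 13, 23, 43, 83, 163, 317, 631::nat]"
    by (simp del: prime_nat_numeral_eq)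
  from bertrand_of_prime_chain[OF this] show ?thesis using assms True by simp
qed (simp add: bertrand_large)

section \<open>Binomial coefficients avoiding given primes\<close>

lemma prime_power_multiplicity_dvd_if_not_dvd_choose:
  fixes p n k :: nat
  assumes p: "prime p" and k: "0 < k" and not_dvd: "\<not> p dvd (n choose k)"
  shows "p ^ multiplicity p n dvd k"
proof -
  have "p ^ multiplicity p n dvd n * (n - 1 choose (k - 1))" by (simp add: multiplicity_dvd)
  hence "p ^ multiplicity p n dvd k * (n choose k)" by (simp add: times_binomial_minus1_eq[OF k])
  moreover have "coprime (p ^ multiplicity p n) (n choose k)"
    using p not_dvd by (simp add: prime_imp_coprime)
  ultimately show ?thesis by (simp add: coprime_dvd_mult_left_iff)
qed

lemma prime_powers_dvd_if_not_dvd_choose: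
  fixes p1 p2 n k :: nat
  assumes "prime p1" "prime p2" "p1 \<noteq> p2" "0 < k"
    and "\<not> p1 dvd (n choose k)" "\<not> p2 dvd (n choose k)"
  shows "p1 ^ multiplicity p1 n * p2 ^ multiplicity p2 n dvd k"
  using assms prime_power_multiplicity_dvd_if_not_dvd_choose
  by (simp add: divides_mult primes_coprime)

lemma largest_prime_below_not_dvd:
  fixes n q :: nat
  assumes q: "prime q" "q < n" and largest: "\<forall>r. prime r \<and> r < n \<longrightarrow> r \<le> q"
  shows "\<not> q dvd n"
proof
  assume "q dvd n"
  then obtain c where c: "n = q * c" by blast
  with q(2) have "c \<noteq> 0" "c \<noteq> 1" by auto
  hence "2 * q \<le> n" using c by simp
  obtain p where p: "prime p" "q < p" "p \<le> 2 * q"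
    using bertrand[of q] q(1) prime_ge_1_nat by blast
  have "p \<noteq> 2 * q" using p(1) q(1) prime_product[of 2 q] by auto
  hence "p < n" using p(3) \<open>2 * q \<le> n\<close> by linarith
  with largest p show False by auto
qed

lemma one_of_three_primes_dvd_choose:
  fixes p1 p2 q n k :: nat
  assumes p: "prime p1" "prime p2" "p1 \<noteq> p2" and q: "prime q" "q \<le> n"
    and k: "0 < k" "k < n"
    and big: "n - q < p1 ^ multiplicity p1 n * p2 ^ multiplicity p2 n"
  shows "p1 dvd (n choose k) \<or> p2 dvd (n choose k) \<or> q dvd (n choose k)"
proof (rule ccontr)
  let ?P = "p1 ^ multiplicity p1 n * p2 ^ multiplicity p2 n"
  assume "\<not> ?thesis"
  hence not_dvd: "\<not> p1 dvd (n choose k)" "\<not> p2 dvd (n choose k)" "\<not> q dvd (n choose k)"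
    by auto
  have "?P dvd k"
    using p k(1) not_dvd(1,2) by (rule prime_powers_dvd_if_not_dvd_choose)
  hence "?P \<le> k" using k(1) by (rule dvd_imp_le)
  have "n choose (n - k) = n choose k" using k(2) by (simp add: binomial_symmetric[symmetric])
  hence "?P dvd n - k"
    using p not_dvd(1,2) k(2) by (intro prime_powers_dvd_if_not_dvd_choose) simp_all
  hence "?P \<le> n - k" using k(2) by (intro dvd_imp_le) simp_all
  hence "k < q" "n - k < q" using \<open>?P \<le> k\<close> big q(2) by linarith+
  with q have "q dvd (n choose k)" by (intro prime_dvd_choose)
  with \<open>\<not> q dvd (n choose k)\<close> show False by contradiction
qed

theorem mainTheorem13:
  fixes n p1 p2 q1 :: nat
  assumes "n > 0"
    and "card (prime_factors n) \<ge> 2"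
    and "prime q1" and "q1 < n" and "\<forall>q. prime q \<and> q < n \<longrightarrow> q \<le> q1"
    and "p1 \<in> prime_factors n" and "p2 \<in> prime_factors n" and "p1 \<noteq> p2"
    and "\<forall>p\<in>prime_factors n. p ^ multiplicity p n \<le> p1 ^ multiplicity p1 n"
    and "\<forall>p\<in>prime_factors n. p \<noteq> p1 \<longrightarrow> p ^ multiplicity p n \<le> p2 ^ multiplicity p2 n"
    and "p1 ^ multiplicity p1 n * p2 ^ multiplicity p2 n > n - q1"
  shows "cond1_var n 3 {p1, p2, q1}"
proof -
  have p: "prime p1" "p1 dvd n" "prime p2" "p2 dvd n" using assms(6,7) by auto
  have "\<not> q1 dvd n" using assms(3-5) by (rule largest_prime_below_not_dvd)
  hence "q1 \<noteq> p1" "q1 \<noteq> p2" using p by auto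
  hence "card {p1, p2, q1} = 3" using assms(8) by simp
  moreover have "\<exists>p\<in>{p1, p2, q1}. p dvd (n choose k)" if "1 \<le> k" "k \<le> n - 1" for k
    using one_of_three_primes_dvd_choose[of p1 p2 q1 n k] p assms(1,3,4,8,11) that by auto
  ultimately show ?thesis using p assms(3) unfolding cond1_var_def by auto
qed

end
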